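(* Suppose all agents are single-minded, agent $i$ having value $v_i>0$ for any set containing $S_i\subseteq M$ (and $0$ otherwise). Consider the following algorithm (SingleMinded MC-CWE). Phase 1: let $Q=\{i:|S_i|\le\sqrt{m}\}$; process agents of $Q$ in decreasing order of $v_i$, assigning $x_i=S_i$ to agent $i$ if $S_i$ is disjoint from all sets assigned so far (all other agents get $x_i=\emptyset$); then add each item not yet allocated to an arbitrary nonempty bundle $x_j$. Phase 2: for each $i\notin Q$ in decreasing order of $v_i$, let $C_i=\{j: x_j\cap S_i\neq\emptyset\}$; if $v_i>\sum_{j\in C_i}v_j$ then set $x_i\leftarrow\bigcup_{j\in C_i}x_j$ and $x_j\leftarrow\emptyset$ for each $j\in C_i$. Return $x$. Then the returned allocation is an MC-CWE allocation whose social welfare is within a factor $O(\sqrt{m})$ of the optimal social welfare over all allocations, and the algorithm can be implemented with a polynomial number of value queries.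
   Context: $M$ is a finite set of $m$ indivisible items and $[n]$ a set of agents. An allocation is a tuple $(x_0,\dots,x_n)$ of pairwise disjoint sets with union $M$ ($x_0$ unallocated); social welfare is $\sum_i v_i(x_i)$ where for single-minded agent $i$, $v_i(T)=v_i$ if $S_i\subseteq T$ and $0$ otherwise. An allocation is MC-CWE if there are prices $p_k\ge0$ for each nonempty bundle $x_k$ such that (i) for every agent $i$ and every set $T$ of indices of nonempty bundles, $u_i\ge v_i(\bigcup_{k\in T}x_k)-\sum_{k\in T}p_k$, where $u_i=v_i(x_i)-p_i$ if $x_i\neq\emptyset$ and $0$ otherwise; and (ii) $p_0=0$ if $x_0\ne\emptyset$. A value query asks agent $i$ for $v_i(S)$ for a given $S$. *)

theory Defs
  imports Complex_Main
begin

text \<open>Agents are 1..n; index 0 denotes the unallocated bundle. Allocations are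
  functions x :: nat => 'a set, only indices 0..n are meaningful.\<close>

definition sm_val :: "(nat \<Rightarrow> 'a set) \<Rightarrow> (nat \<Rightarrow> real) \<Rightarrow> nat \<Rightarrow> 'a set \<Rightarrow> real" where
  "sm_val S v i T = (if S i \<subseteq> T then v i else 0)"

definition is_allocation :: "'a set \<Rightarrow> nat \<Rightarrow> (nat \<Rightarrow> 'a set) \<Rightarrow> bool" where
  "is_allocation M n x \<longleftrightarrow>
     (\<forall>j\<in>{0..n}. \<forall>k\<in>{0..n}. j \<noteq> k \<longrightarrow> x j \<inter> x k = {}) \<and> (\<Union>j\<in>{0..n}. x j) = M"

definition social_welfare :: "nat \<Rightarrow> (nat \<Rightarrow> 'a set) \<Rightarrow> (nat \<Rightarrow> real) \<Rightarrow> (nat \<Rightarrow> 'a set) \<Rightarrow> real" where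
  "social_welfare n S v x = (\<Sum>i\<in>{1..n}. sm_val S v i (x i))"

definition is_MC_CWE :: "nat \<Rightarrow> (nat \<Rightarrow> 'a set) \<Rightarrow> (nat \<Rightarrow> real) \<Rightarrow> (nat \<Rightarrow> 'a set) \<Rightarrow> bool" where
  "is_MC_CWE n S v x \<longleftrightarrow>
     (\<exists>p :: nat \<Rightarrow> real.
        (\<forall>k\<in>{0..n}. x k \<noteq> {} \<longrightarrow> p k \<ge> 0) \<and>
        (\<forall>i\<in>{1..n}. \<forall>T. T \<subseteq> {k\<in>{0..n}. x k \<noteq> {}} \<longrightarrow>
            (if x i \<noteq> {} then sm_val S v i (x i) - p i else 0)
              \<ge> sm_val S v i (\<Union>k\<in>T. x k) - (\<Sum>k\<in>T. p k)) \<and>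
        (x 0 \<noteq> {} \<longrightarrow> p 0 = 0))"

fun phase1 :: "(nat \<Rightarrow> 'a set) \<Rightarrow> (nat \<Rightarrow> 'a set) \<Rightarrow> nat list \<Rightarrow> (nat \<Rightarrow> 'a set)" where
  "phase1 S x [] = x"
| "phase1 S x (i # is) =
     phase1 S (if S i \<inter> (\<Union>j. x j) = {} then x(i := S i) else x) is"

definition fill_leftover :: "'a set \<Rightarrow> nat \<Rightarrow> (nat \<Rightarrow> 'a set) \<Rightarrow> (nat \<Rightarrow> 'a set) \<Rightarrow> bool" where
  "fill_leftover M n x x' \<longleftrightarrow>
     (let L = M - (\<Union>j\<in>{1..n}. x j) in
      if (\<exists>j\<in>{1..n}. x j \<noteq> {}) then
        (\<exists>f :: 'a \<Rightarrow> nat. (\<forall>a\<in>L. f a \<in> {1..n} \<and> x (f a) \<noteq> {}) \<and> x' 0 = {} \<and>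
           (\<forall>j\<in>{1..n}. x' j = x j \<union> {a\<in>L. f a = j}))
      else (x' 0 = L \<and> (\<forall>j\<in>{1..n}. x' j = x j)))"

fun phase2 :: "nat \<Rightarrow> (nat \<Rightarrow> 'a set) \<Rightarrow> (nat \<Rightarrow> real) \<Rightarrow> (nat \<Rightarrow> 'a set) \<Rightarrow> nat list
                 \<Rightarrow> (nat \<Rightarrow> 'a set)" where
  "phase2 n S v x [] = x"
| "phase2 n S v x (i # is) =
     (let C = {j\<in>{0..n}. x j \<inter> S i \<noteq> {}} in
      if v i > (\<Sum>j\<in>C. if j = 0 then 0 else v j)
      then phase2 n S v (\<lambda>k. if k = i then (\<Union>j\<in>C. x j) else if k \<in> C then {} else x k) is
      else phase2 n S v x is)"

definition small_agents :: "'a set \<Rightarrow> nat \<Rightarrow> (nat \<Rightarrow> 'a set) \<Rightarrow> nat set" where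
  "small_agents M n S = {i\<in>{1..n}. real (card (S i)) \<le> sqrt (real (card M))}"

text \<open>x is a possible output of SingleMinded MC-CWE (over all tie-breakings and
  all arbitrary choices in the algorithm).\<close>
definition sm_alg_output :: "'a set \<Rightarrow> nat \<Rightarrow> (nat \<Rightarrow> 'a set) \<Rightarrow> (nat \<Rightarrow> real)
                               \<Rightarrow> (nat \<Rightarrow> 'a set) \<Rightarrow> bool" where
  "sm_alg_output M n S v x \<longleftrightarrow>
     (\<exists>l1 l2 x2.
        distinct l1 \<and> set l1 = small_agents M n S \<and> sorted_wrt (\<lambda>i j. v j \<le> v i) l1 \<and>
        fill_leftover M n (phase1 S (\<lambda>_. {}) l1) x2 \<and>
        distinct l2 \<and> set l2 = {1..n} - small_agents M n S \<and> sorted_wrt (\<lambda>i j. v j \<le> v i) l2 \<and>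
        x = phase2 n S v x2 l2)"

text \<open>Adaptive value-query algorithms as query trees: a node asks agent i for v_i(T)
  and continues depending on the answer.\<close>
datatype ('a, 'b) qtree = Leaf 'b | Query nat "'a set" "real \<Rightarrow> ('a, 'b) qtree"

primrec run_qtree :: "('a, 'b) qtree \<Rightarrow> (nat \<Rightarrow> 'a set \<Rightarrow> real) \<Rightarrow> 'b \<times> nat" where
  "run_qtree (Leaf r) orc = (r, 0)"
| "run_qtree (Query i T k) orc = (let (r, c) = run_qtree (k (orc i T)) orc in (r, Suc c))"

end

theory Submission
  imports Defs
begin

text \<open>Price every nonempty agent bundle at its owner's value and the unallocated bundle at 0.
  Phase 1 allocates the small demand sets greedily, so every small agent's set meets a phase-1
  winner of at least its value. Phase 2 lets an agent take over the bundles meeting its set only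
  when it outbids their owners together, so the price of the bundles meeting any set of items never
  decreases. At the end every agent would therefore pay at least its value for any collection of
  bundles covering its demand set, which is the equilibrium condition, and the welfare equals the
  total price Z. In an arbitrary allocation each phase-1 winner w meets at most |S_w| \<le> \<surd>m of
  the disjoint small winning sets, so small agents contribute at most \<surd>m Z, and at most \<surd>m large
  sets fit disjointly into M, each worth at most Z. The algorithm only needs the queries
  v_i(M) and v_i(M - {a}), which determine S_i and v_i because v_i > 0.\<close>

abbreviation valid_bids :: "'a set \<Rightarrow> nat \<Rightarrow> (nat \<Rightarrow> 'a set) \<Rightarrow> (nat \<Rightarrow> real) \<Rightarrow> bool" where
  "valid_bids M n S v \<equiv> \<forall>i\<in>{1..n}. S i \<noteq> {} \<and> S i \<subseteq> M \<and> v i > 0"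

lemma phase1_snoc:
  "phase1 S x (l @ [i]) = (let y = phase1 S x l in if S i \<inter> (\<Union>j. y j) = {} then y(i := S i) else y)"
  by (induction l arbitrary: x) (simp_all add: Let_def)

definition greedy_invariant :: "(nat \<Rightarrow> 'a set) \<Rightarrow> (nat \<Rightarrow> real) \<Rightarrow> nat list \<Rightarrow> (nat \<Rightarrow> 'a set) \<Rightarrow> bool" where
  "greedy_invariant S v l y \<longleftrightarrow>
     (\<forall>j. y j \<noteq> {} \<longrightarrow> j \<in> set l \<and> y j = S j) \<and>
     (\<forall>j k. j \<noteq> k \<longrightarrow> y j \<inter> y k = {}) \<and>
     (\<forall>i\<in>set l. \<exists>w. y w \<noteq> {} \<and> S w \<inter> S i \<noteq> {} \<and> v i \<le> v w)"

lemma greedy_invariant_assign: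
  assumes inv: "greedy_invariant S v l y" and free: "S i \<inter> (\<Union>j. y j) = {}"
    and "i \<notin> set l" "S i \<noteq> {}"
  shows "greedy_invariant S v (l @ [i]) (y(i := S i))"
proof -
  have yi: "y i = {}" using inv assms(3) by (auto simp: greedy_invariant_def)
  have "\<forall>j. (y(i := S i)) j \<noteq> {} \<longrightarrow> j \<in> set (l @ [i]) \<and> (y(i := S i)) j = S j"
    using inv by (auto simp: greedy_invariant_def)
  moreover have "\<forall>j k. j \<noteq> k \<longrightarrow> (y(i := S i)) j \<inter> (y(i := S i)) k = {}"
    using inv free by (auto simp: greedy_invariant_def)
  moreover have "\<exists>w. (y(i := S i)) w \<noteq> {} \<and> S w \<inter> S i' \<noteq> {} \<and> v i' \<le> v w"
    if i': "i' \<in> set (l @ [i])" for i'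
  proof (cases "i' = i")
    case True
    then show ?thesis using assms(4) by (intro exI[of _ i]) auto
  next
    case False
    then have "i' \<in> set l" using i' by simp
    then obtain w where "y w \<noteq> {}" "S w \<inter> S i' \<noteq> {}" "v i' \<le> v w"
      using inv unfolding greedy_invariant_def by blast
    then show ?thesis using yi by (intro exI[of _ w]) auto
  qed
  ultimately show ?thesis unfolding greedy_invariant_def by blast
qed

lemma greedy_invariant_skip:
  fixes v :: "nat \<Rightarrow> real"
  assumes inv: "greedy_invariant S v l y" and blocked: "S i \<inter> (\<Union>j. y j) \<noteq> {}"
    and below: "\<forall>j\<in>set l. v i \<le> v j"
  shows "greedy_invariant S v (l @ [i]) y"
proof -
  obtain w where w: "S i \<inter> y w \<noteq> {}" using blocked by blast
  then have "w \<in> set l" "y w = S w" using inv by (auto simp: greedy_invariant_def)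
  then have "\<exists>w. y w \<noteq> {} \<and> S w \<inter> S i \<noteq> {} \<and> v i \<le> v w"
    using w below by (intro exI[of _ w]) auto
  then show ?thesis using inv by (auto simp: greedy_invariant_def)
qed

lemma greedy_invariant_phase1:
  fixes v :: "nat \<Rightarrow> real"
  assumes "distinct l" "sorted_wrt (\<lambda>i j. v j \<le> v i) l" "\<forall>i\<in>set l. S i \<noteq> {}"
  shows "greedy_invariant S v l (phase1 S (\<lambda>_. {}) l)"
  using assms
proof (induction l rule: rev_induct)
  case Nil
  then show ?case by (simp add: greedy_invariant_def)
next
  case (snoc i l)
  define y where "y = phase1 S (\<lambda>_. {}) l"
  have inv: "greedy_invariant S v l y"
    using snoc by (simp add: y_def sorted_wrt_append)
  have "i \<notin> set l" "S i \<noteq> {}" "\<forall>j\<in>set l. v i \<le> v j"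
    using snoc.prems by (auto simp: sorted_wrt_append)
  then show ?case
    using greedy_invariant_assign[OF inv] greedy_invariant_skip[OF inv]
    by (simp add: phase1_snoc y_def[symmetric] Let_def del: fun_upd_apply)
qed

lemma fill_leftover_allocation:
  assumes fill: "fill_leftover M n x x'" and "\<forall>j\<in>{1..n}. x j \<subseteq> M"
    and "\<forall>j\<in>{1..n}. \<forall>k\<in>{1..n}. j \<noteq> k \<longrightarrow> x j \<inter> x k = {}"
  shows "is_allocation M n x'" "\<forall>j\<in>{1..n}. x j \<subseteq> x' j" "\<forall>j\<in>{1..n}. x j = {} \<longrightarrow> x' j = {}"
proof -
  define L where "L = M - (\<Union>j\<in>{1..n}. x j)"
  have agents: "{0..n} = insert 0 {1..n}" by auto
  have "is_allocation M n x' \<and> (\<forall>j\<in>{1..n}. x j \<subseteq> x' j) \<and> (\<forall>j\<in>{1..n}. x j = {} \<longrightarrow> x' j = {})"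
  proof (cases "\<exists>j\<in>{1..n}. x j \<noteq> {}")
    case True
    then obtain f where f: "\<forall>a\<in>L. f a \<in> {1..n} \<and> x (f a) \<noteq> {}" "x' 0 = {}"
      "\<forall>j\<in>{1..n}. x' j = x j \<union> {a\<in>L. f a = j}"
      using fill unfolding fill_leftover_def L_def Let_def by auto
    have "x' j \<inter> x' k = {}" if "j \<in> {1..n}" "k \<in> {1..n}" "j \<noteq> k" for j k
    proof -
      have "x j \<inter> x k = {}" using assms(3) that by blast
      then show ?thesis using that f(3) unfolding L_def by auto
    qed
    moreover have "(\<Union>j\<in>{1..n}. x' j) = (\<Union>j\<in>{1..n}. x j) \<union> L"
      using f(1,3) by force
    moreover have "(\<Union>j\<in>{1..n}. x j) \<union> L = M"
      using assms(2) unfolding L_def by auto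
    ultimately show ?thesis
      unfolding is_allocation_def agents using f by auto
  next
    case False
    then have "x' 0 = M" "\<forall>j\<in>{1..n}. x' j = {}"
      using fill unfolding fill_leftover_def L_def Let_def by auto
    then show ?thesis using False unfolding is_allocation_def agents by auto
  qed
  then show "is_allocation M n x'" "\<forall>j\<in>{1..n}. x j \<subseteq> x' j" "\<forall>j\<in>{1..n}. x j = {} \<longrightarrow> x' j = {}"
    by auto
qed

text \<open>The equilibrium prices are p_k = v_k on agent bundles and p_0 = 0; cover_price n v x A is,
  for an allocation x, the price of the cheapest collection of bundles whose union contains A.\<close>

definition bundle_price :: "(nat \<Rightarrow> real) \<Rightarrow> nat \<Rightarrow> real" where
  "bundle_price v k = (if k = 0 then 0 else v k)"

definition cover_price :: "nat \<Rightarrow> (nat \<Rightarrow> real) \<Rightarrow> (nat \<Rightarrow> 'a set) \<Rightarrow> 'a set \<Rightarrow> real" where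
  "cover_price n v x A = (\<Sum>k\<in>{k\<in>{0..n}. x k \<inter> A \<noteq> {}}. bundle_price v k)"

definition merge_bundles :: "nat \<Rightarrow> nat set \<Rightarrow> (nat \<Rightarrow> 'a set) \<Rightarrow> nat \<Rightarrow> 'a set" where
  "merge_bundles i C x = (\<lambda>k. if k = i then (\<Union>j\<in>C. x j) else if k \<in> C then {} else x k)"

definition owners_served :: "nat \<Rightarrow> (nat \<Rightarrow> 'a set) \<Rightarrow> (nat \<Rightarrow> 'a set) \<Rightarrow> bool" where
  "owners_served n S x \<longleftrightarrow> (\<forall>j\<in>{1..n}. x j \<noteq> {} \<longrightarrow> S j \<subseteq> x j)"

lemma phase2_Cons:
  "phase2 n S v x (i # l) =
     (if cover_price n v x (S i) < v i
      then phase2 n S v (merge_bundles i {j\<in>{0..n}. x j \<inter> S i \<noteq> {}} x) l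
      else phase2 n S v x l)"
  by (simp add: cover_price_def bundle_price_def merge_bundles_def Let_def)

declare phase2.simps(2) [simp del]

lemma bundle_price_nonneg: "\<forall>k\<in>{1..n}. 0 \<le> v k \<Longrightarrow> k \<le> n \<Longrightarrow> 0 \<le> bundle_price v k"
  by (simp add: bundle_price_def)

lemma cover_price_le_sum:
  assumes "\<forall>k\<in>{1..n}. 0 \<le> v k" "{k\<in>{0..n}. x k \<inter> A \<noteq> {}} \<subseteq> T" "T \<subseteq> {0..n}"
  shows "cover_price n v x A \<le> sum (bundle_price v) T"
  unfolding cover_price_def
  using assms bundle_price_nonneg[OF assms(1)] finite_subset[OF assms(3)]
  by (intro sum_mono2) auto

lemma cover_price_mono:
  assumes "\<forall>k\<in>{1..n}. 0 \<le> v k" "A \<subseteq> B"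
  shows "cover_price n v x A \<le> cover_price n v x B"
  unfolding cover_price_def[of n v x B] using assms(2)
  by (intro cover_price_le_sum[OF assms(1)]) auto

lemma cover_price_ge_owner:
  assumes "\<forall>k\<in>{1..n}. 0 \<le> v k" "k \<in> {1..n}" "x k \<inter> A \<noteq> {}"
  shows "v k \<le> cover_price n v x A"
proof -
  have "v k = bundle_price v k" using assms(2) by (simp add: bundle_price_def)
  also have "\<dots> \<le> cover_price n v x A"
    unfolding cover_price_def using assms bundle_price_nonneg[OF assms(1)]
    by (intro member_le_sum) auto
  finally show ?thesis .
qed

lemma cover_price_items:
  assumes "is_allocation M n x"
  shows "cover_price n v x M = sum v {w\<in>{1..n}. x w \<noteq> {}}"
proof -
  have "{k\<in>{0..n}. x k \<inter> M \<noteq> {}} = {k\<in>{0..n}. x k \<noteq> {}}"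
    using assms unfolding is_allocation_def by blast
  then have "cover_price n v x M = sum (bundle_price v) ({k\<in>{0..n}. x k \<noteq> {}} - {0})"
    unfolding cover_price_def by (intro sum.mono_neutral_right) (auto simp: bundle_price_def)
  also have "\<dots> = sum v {w\<in>{1..n}. x w \<noteq> {}}"
    by (intro sum.cong) (auto simp: bundle_price_def)
  finally show ?thesis .
qed

lemma is_allocation_merge_bundles:
  assumes alloc: "is_allocation M n x" and "i \<in> {0..n}" "C \<subseteq> {0..n}" "x i = {}"
  shows "is_allocation M n (merge_bundles i C x)"
proof -
  have same_bundle: "j = k" if "a \<in> x j" "a \<in> x k" "j \<in> {0..n}" "k \<in> {0..n}" for a j k
    using alloc that unfolding is_allocation_def by blast
  have "(\<Union>k\<in>{0..n}. merge_bundles i C x k) = (\<Union>k\<in>{0..n}. x k)"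
  proof (intro equalityI subsetI)
    fix a assume "a \<in> (\<Union>k\<in>{0..n}. merge_bundles i C x k)"
    then show "a \<in> (\<Union>k\<in>{0..n}. x k)"
      using assms(3) unfolding merge_bundles_def by (auto split: if_splits)
  next
    fix a assume "a \<in> (\<Union>k\<in>{0..n}. x k)"
    then obtain k where k: "k \<in> {0..n}" "a \<in> x k" by blast
    then have "a \<in> merge_bundles i C x (if k \<in> C then i else k)"
      using assms(4) unfolding merge_bundles_def by auto
    then show "a \<in> (\<Union>k\<in>{0..n}. merge_bundles i C x k)"
      using k(1) assms(2) by (auto split: if_splits)
  qed
  moreover have "merge_bundles i C x j \<inter> merge_bundles i C x k = {}"
    if "j \<in> {0..n}" "k \<in> {0..n}" "j \<noteq> k" for j k
  proof -
    have "a \<in> x j' \<Longrightarrow> a \<in> x k' \<Longrightarrow> j' \<in> C \<Longrightarrow> k' \<notin> C \<Longrightarrow> k' \<in> {0..n} \<Longrightarrow> False" for a j' k'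
      using same_bundle assms(3) by blast
    then show ?thesis
      using that same_bundle unfolding merge_bundles_def by (auto split: if_splits)
  qed
  ultimately show ?thesis using alloc unfolding is_allocation_def by auto
qed

lemma demand_subset_merge_bundles:
  assumes "is_allocation M n x" "S i \<subseteq> M"
  shows "S i \<subseteq> merge_bundles i {j\<in>{0..n}. x j \<inter> S i \<noteq> {}} x i"
proof
  fix a assume "a \<in> S i"
  moreover obtain j where "j \<in> {0..n}" "a \<in> x j"
    using assms \<open>a \<in> S i\<close> unfolding is_allocation_def by blast
  ultimately show "a \<in> merge_bundles i {j\<in>{0..n}. x j \<inter> S i \<noteq> {}} x i"
    unfolding merge_bundles_def by auto
qed

lemma owners_served_merge_bundles:
  assumes "is_allocation M n x" "owners_served n S x" "S i \<subseteq> M"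
  shows "owners_served n S (merge_bundles i {j\<in>{0..n}. x j \<inter> S i \<noteq> {}} x)"
  using assms(2) demand_subset_merge_bundles[of M n x S i] assms(1,3)
  unfolding owners_served_def merge_bundles_def by auto

lemma cover_price_merge_bundles:
  assumes nonneg: "\<forall>k\<in>{1..n}. 0 \<le> v k" and i: "i \<in> {1..n}" "x i = {}"
    and C: "C \<subseteq> {0..n}" "sum (bundle_price v) C \<le> v i"
  shows "cover_price n v x A \<le> cover_price n v (merge_bundles i C x) A"
proof -
  define K where "K = {k\<in>{0..n}. x k \<inter> A \<noteq> {}}"
  define K' where "K' = {k\<in>{0..n}. merge_bundles i C x k \<inter> A \<noteq> {}}"
  have prices: "cover_price n v x A = sum (bundle_price v) K"
    "cover_price n v (merge_bundles i C x) A = sum (bundle_price v) K'"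
    by (simp_all add: cover_price_def K_def K'_def)
  show ?thesis
  proof (cases "K \<inter> C = {}")
    case True
    then have "\<forall>k\<in>C. x k \<inter> A = {}" using C(1) unfolding K_def by blast
    then have "K' = K" using i(2) by (auto simp: K_def K'_def merge_bundles_def)
    then show ?thesis using prices by simp
  next
    case False
    have finite: "finite K" "finite C" using C(1) finite_subset by (auto simp: K_def)
    have "K' = insert i (K - C)" and "i \<notin> K - C"
      using False i C(1) by (auto simp: K_def K'_def merge_bundles_def)
    then have "sum (bundle_price v) K' = v i + sum (bundle_price v) (K - C)"
      using finite i(1) by (simp add: bundle_price_def)
    moreover have "sum (bundle_price v) (K \<inter> C) \<le> sum (bundle_price v) C"
      using finite C(1) bundle_price_nonneg[OF nonneg] by (intro sum_mono2) auto
    moreover have "sum (bundle_price v) K = sum (bundle_price v) (K \<inter> C) + sum (bundle_price v) (K - C)"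
      using finite by (simp add: sum.Int_Diff)
    ultimately show ?thesis using prices C(2) by linarith
  qed
qed

lemma phase2_merge_step:
  fixes v :: "nat \<Rightarrow> real"
  assumes nonneg: "\<forall>k\<in>{1..n}. 0 \<le> v k" and alloc: "is_allocation M n x"
    and served: "owners_served n S x"
    and i: "i \<in> {1..n}" "x i = {}" "S i \<noteq> {}" "S i \<subseteq> M"
    and outbid: "cover_price n v x (S i) < v i"
  defines "x' \<equiv> merge_bundles i {j\<in>{0..n}. x j \<inter> S i \<noteq> {}} x"
  shows "is_allocation M n x'" "owners_served n S x'"
    "cover_price n v x A \<le> cover_price n v x' A" "v i \<le> cover_price n v x' (S i)"
proof -
  have C: "{j\<in>{0..n}. x j \<inter> S i \<noteq> {}} \<subseteq> {0..n}" by auto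
  show "is_allocation M n x'"
    unfolding x'_def using is_allocation_merge_bundles[OF alloc _ C] i(1,2) by simp
  show "owners_served n S x'"
    unfolding x'_def using owners_served_merge_bundles[OF alloc served i(4)] .
  have "sum (bundle_price v) {j\<in>{0..n}. x j \<inter> S i \<noteq> {}} = cover_price n v x (S i)"
    by (simp add: cover_price_def)
  then show "cover_price n v x A \<le> cover_price n v x' A"
    unfolding x'_def using outbid C
    by (intro cover_price_merge_bundles[where x = x, OF nonneg i(1,2)]) auto
  show "v i \<le> cover_price n v x' (S i)"
    using demand_subset_merge_bundles[where S = S, OF alloc i(4)] i(3)
    by (intro cover_price_ge_owner[OF nonneg i(1)]) (auto simp: x'_def)
qed

lemma phase2_invariant:
  assumes bids: "valid_bids M n S v"
    and "is_allocation M n x" "owners_served n S x"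
    "set l \<subseteq> {1..n}" "distinct l" "\<forall>i\<in>set l. x i = {}"
  shows "is_allocation M n (phase2 n S v x l) \<and> owners_served n S (phase2 n S v x l) \<and>
    (\<forall>A. cover_price n v x A \<le> cover_price n v (phase2 n S v x l) A) \<and>
    (\<forall>i\<in>set l. v i \<le> cover_price n v (phase2 n S v x l) (S i))"
  using assms(2-)
proof (induction l arbitrary: x)
  case Nil
  then show ?case by simp
next
  case (Cons i l)
  have nonneg: "\<forall>k\<in>{1..n}. 0 \<le> v k" using bids by (simp add: less_imp_le)
  have i: "i \<in> {1..n}" "x i = {}" "S i \<noteq> {}" "S i \<subseteq> M" using Cons.prems bids by auto
  show ?case
  proof (cases "cover_price n v x (S i) < v i")
    case True
    define x' where "x' = merge_bundles i {j\<in>{0..n}. x j \<inter> S i \<noteq> {}} x"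
    note merge = phase2_merge_step[OF nonneg Cons.prems(1,2) i True, folded x'_def]
    have "\<forall>j\<in>set l. x' j = {}"
      using Cons.prems(4,5) by (auto simp: x'_def merge_bundles_def)
    then have IH: "is_allocation M n (phase2 n S v x' l) \<and> owners_served n S (phase2 n S v x' l) \<and>
        (\<forall>A. cover_price n v x' A \<le> cover_price n v (phase2 n S v x' l) A) \<and>
        (\<forall>i\<in>set l. v i \<le> cover_price n v (phase2 n S v x' l) (S i))"
      using Cons.IH merge(1,2) Cons.prems(3,4) by simp
    have "phase2 n S v x (i # l) = phase2 n S v x' l"
      using True by (simp add: phase2_Cons x'_def)
    then show ?thesis
      using IH merge(3,4) by (auto intro: order_trans)
  next
    case False
    have IH: "is_allocation M n (phase2 n S v x l) \<and> owners_served n S (phase2 n S v x l) \<and>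
        (\<forall>A. cover_price n v x A \<le> cover_price n v (phase2 n S v x l) A) \<and>
        (\<forall>i\<in>set l. v i \<le> cover_price n v (phase2 n S v x l) (S i))"
      using Cons.IH Cons.prems by simp
    then show ?thesis
      using False by (simp add: phase2_Cons) (meson not_less order_trans)
  qed
qed

lemma MC_CWE_if_priced_out:
  assumes nonneg: "\<forall>k\<in>{1..n}. 0 \<le> v k" and alloc: "is_allocation M n x"
    and served: "owners_served n S x"
    and priced_out: "\<forall>i\<in>{1..n}. v i \<le> cover_price n v x (S i)"
  shows "is_MC_CWE n S v x"
  unfolding is_MC_CWE_def
proof (intro exI[of _ "bundle_price v"] conjI ballI allI impI)
  show "0 \<le> bundle_price v k" if "k \<in> {0..n}" for k
    using that bundle_price_nonneg[OF nonneg] by simp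
  show "bundle_price v 0 = 0" by (simp add: bundle_price_def)
  fix i T assume i: "i \<in> {1..n}" and T: "T \<subseteq> {k\<in>{0..n}. x k \<noteq> {}}"
  have utility: "(if x i \<noteq> {} then sm_val S v i (x i) - bundle_price v i else 0) = 0"
    using served i by (auto simp: owners_served_def sm_val_def bundle_price_def)
  have "sm_val S v i (\<Union>k\<in>T. x k) \<le> sum (bundle_price v) T"
  proof (cases "S i \<subseteq> (\<Union>k\<in>T. x k)")
    case True
    have "{k\<in>{0..n}. x k \<inter> S i \<noteq> {}} \<subseteq> T"
    proof
      fix k assume "k \<in> {k\<in>{0..n}. x k \<inter> S i \<noteq> {}}"
      then obtain a where a: "k \<in> {0..n}" "a \<in> x k" "a \<in> S i" by blast
      moreover obtain t where "t \<in> T" "a \<in> x t" using True a(3) by blast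
      ultimately have "k = t" using T alloc unfolding is_allocation_def by blast
      then show "k \<in> T" using \<open>t \<in> T\<close> by simp
    qed
    then have "cover_price n v x (S i) \<le> sum (bundle_price v) T"
      using T by (intro cover_price_le_sum[OF nonneg]) auto
    moreover have "v i \<le> cover_price n v x (S i)" using priced_out i by blast
    ultimately show ?thesis using True by (simp add: sm_val_def)
  next
    case False
    have "0 \<le> sum (bundle_price v) T"
      using T bundle_price_nonneg[OF nonneg] by (intro sum_nonneg) auto
    then show ?thesis using False by (simp add: sm_val_def)
  qed
  then show "sm_val S v i (\<Union>k\<in>T. x k) - sum (bundle_price v) T
      \<le> (if x i \<noteq> {} then sm_val S v i (x i) - bundle_price v i else 0)"
    unfolding utility by simp
qed

lemma social_welfare_owned:
  assumes "\<forall>i\<in>{1..n}. S i \<noteq> {}" "owners_served n S x"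
  shows "social_welfare n S v x = sum v {w\<in>{1..n}. x w \<noteq> {}}"
proof -
  have "social_welfare n S v x = (\<Sum>w\<in>{1..n}. if x w \<noteq> {} then v w else 0)"
    unfolding social_welfare_def using assms
    by (intro sum.cong) (auto simp: owners_served_def sm_val_def)
  then show ?thesis by (simp only: sum.inter_filter[OF finite_atLeastAtMost])
qed

lemma card_meeting_disjoint_le:
  assumes "finite B" "\<forall>i\<in>I. \<forall>j\<in>I. i \<noteq> j \<longrightarrow> S i \<inter> S j = {}"
  shows "card {i\<in>I. B \<inter> S i \<noteq> {}} \<le> card B"
proof -
  define g where "g i = (SOME a. a \<in> B \<inter> S i)" for i
  have g: "g i \<in> B \<inter> S i" if "i \<in> {i\<in>I. B \<inter> S i \<noteq> {}}" for i
    using that some_in_eq[of "B \<inter> S i"] unfolding g_def by blast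
  have "inj_on g {i\<in>I. B \<inter> S i \<noteq> {}}"
  proof (rule inj_onI)
    fix i j assume ij: "i \<in> {i\<in>I. B \<inter> S i \<noteq> {}}" "j \<in> {i\<in>I. B \<inter> S i \<noteq> {}}" "g i = g j"
    then have "S i \<inter> S j \<noteq> {}" using g[OF ij(1)] g[OF ij(2)] by auto
    then show "i = j" using assms(2) ij(1,2) by blast
  qed
  then show ?thesis using g assms(1) by (intro card_inj_on_le) auto
qed
lemma sum_le_by_charging:
  fixes v :: "nat \<Rightarrow> real"
  assumes "finite I" "finite W"
    and disjoint: "\<forall>i\<in>I. \<forall>j\<in>I. i \<noteq> j \<longrightarrow> S i \<inter> S j = {}"
    and W: "\<forall>w\<in>W. finite (S w) \<and> real (card (S w)) \<le> c \<and> 0 \<le> v w"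
    and charged: "\<forall>i\<in>I. \<exists>w\<in>W. S w \<inter> S i \<noteq> {} \<and> v i \<le> v w"
  shows "sum v I \<le> c * sum v W"
proof -
  define f where "f w i = (if S w \<inter> S i \<noteq> {} then v w else 0)" for w i
  have charge: "v i \<le> (\<Sum>w\<in>W. f w i)" if i: "i \<in> I" for i
  proof -
    obtain w where w: "w \<in> W" "S w \<inter> S i \<noteq> {}" "v i \<le> v w" using charged i by blast
    have "v w = f w i" using w by (simp add: f_def)
    also have "\<dots> \<le> (\<Sum>w\<in>W. f w i)"
      using assms(2) W w(1) by (intro member_le_sum) (auto simp: f_def)
    finally show ?thesis using w(3) by linarith
  qed
  have count: "(\<Sum>i\<in>I. f w i) = real (card {i\<in>I. S w \<inter> S i \<noteq> {}}) * v w" for w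
  proof -
    have "(\<Sum>i\<in>I. f w i) = (\<Sum>i\<in>{i\<in>I. S w \<inter> S i \<noteq> {}}. v w)"
      unfolding f_def by (rule sum.inter_filter[symmetric, OF assms(1)])
    then show ?thesis by simp
  qed
  have "sum v I \<le> (\<Sum>i\<in>I. \<Sum>w\<in>W. f w i)" using charge by (rule sum_mono)
  also have "\<dots> = (\<Sum>w\<in>W. \<Sum>i\<in>I. f w i)" by (rule sum.swap)
  also have "\<dots> = (\<Sum>w\<in>W. real (card {i\<in>I. S w \<inter> S i \<noteq> {}}) * v w)"
    by (simp only: count)
  also have "\<dots> \<le> (\<Sum>w\<in>W. c * v w)"
  proof (rule sum_mono)
    fix w assume "w \<in> W"
    then have "card {i\<in>I. S w \<inter> S i \<noteq> {}} \<le> card (S w)"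
      using W disjoint by (intro card_meeting_disjoint_le) auto
    then show "real (card {i\<in>I. S w \<inter> S i \<noteq> {}}) * v w \<le> c * v w"
      using W \<open>w \<in> W\<close> by (intro mult_right_mono) auto
  qed
  also have "\<dots> = c * sum v W" by (rule sum_distrib_left[symmetric])
  finally show ?thesis .
qed

lemma card_disjoint_large_le:
  assumes "finite M" "finite I" "\<forall>i\<in>I. S i \<subseteq> M \<and> c \<le> real (card (S i))"
    "\<forall>i\<in>I. \<forall>j\<in>I. i \<noteq> j \<longrightarrow> S i \<inter> S j = {}"
  shows "real (card I) * c \<le> real (card M)"
proof -
  have finite: "\<forall>i\<in>I. finite (S i)" using assms(1,3) finite_subset by blast
  have "real (card I) * c = (\<Sum>i\<in>I. c)" by simp
  also have "\<dots> \<le> (\<Sum>i\<in>I. real (card (S i)))" using assms(3) by (intro sum_mono) auto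
  also have "\<dots> = real (card (\<Union>i\<in>I. S i))"
    using assms(2,4) finite by (simp add: card_UN_disjoint)
  also have "\<dots> \<le> real (card M)" using assms(1,3) by (intro of_nat_mono card_mono) auto
  finally show ?thesis .
qed
lemma card_disjoint_large_le_sqrt:
  assumes "finite M" "finite I" "\<forall>i\<in>I. S i \<subseteq> M \<and> sqrt (real (card M)) < real (card (S i))"
    "\<forall>i\<in>I. \<forall>j\<in>I. i \<noteq> j \<longrightarrow> S i \<inter> S j = {}"
  shows "real (card I) \<le> sqrt (real (card M))"
proof (cases "I = {}")
  case True
  then show ?thesis by simp
next
  case False
  then obtain i where i: "i \<in> I" by blast
  have "card (S i) \<le> card M" using i assms(1,3) by (intro card_mono) auto
  then have "sqrt (real (card M)) < real (card M)" using i assms(3) by fastforce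
  then have "0 < real (card M)" using real_sqrt_ge_zero[of "real (card M)"] by linarith
  then have "0 < sqrt (real (card M))" by simp
  moreover have "real (card I) * sqrt (real (card M)) \<le> sqrt (real (card M)) * sqrt (real (card M))"
    using card_disjoint_large_le[OF assms(1,2) _ assms(4)] assms(3) by (simp add: less_imp_le)
  ultimately show ?thesis using mult_le_cancel_right_pos by blast
qed

lemma social_welfare_served:
  "social_welfare n S v y = sum v {i\<in>{1..n}. S i \<subseteq> y i}"
  unfolding social_welfare_def sm_val_def by (simp only: sum.inter_filter[OF finite_atLeastAtMost])
lemma served_demands_disjoint:
  assumes "is_allocation M n y"
  shows "\<forall>i\<in>{i\<in>{1..n}. S i \<subseteq> y i}. \<forall>j\<in>{i\<in>{1..n}. S i \<subseteq> y i}. i \<noteq> j \<longrightarrow> S i \<inter> S j = {}"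
  using assms unfolding is_allocation_def by fastforce

lemma welfare_le_sqrt_bound:
  fixes v :: "nat \<Rightarrow> real"
  assumes finite: "finite M" and bids: "valid_bids M n S v" and alloc: "is_allocation M n y"
    and W: "W \<subseteq> small_agents M n S"
    and charged: "\<forall>i\<in>small_agents M n S. \<exists>w\<in>W. S w \<inter> S i \<noteq> {} \<and> v i \<le> v w"
    and value_le: "\<forall>i\<in>{1..n}. v i \<le> Z" and W_le: "sum v W \<le> Z"
  shows "social_welfare n S v y \<le> 2 * sqrt (real (card M)) * Z"
proof -
  define m where "m = sqrt (real (card M))"
  define I where "I = {i\<in>{1..n}. S i \<subseteq> y i}"
  define Q where "Q = small_agents M n S"
  have Q: "Q \<subseteq> {1..n}" "\<forall>i\<in>Q. real (card (S i)) \<le> m"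
    by (auto simp: Q_def m_def small_agents_def)
  have disjoint: "\<forall>i\<in>I. \<forall>j\<in>I. i \<noteq> j \<longrightarrow> S i \<inter> S j = {}"
    unfolding I_def by (rule served_demands_disjoint[OF alloc])
  have finite_S: "finite (S i)" if "i \<in> {1..n}" for i
    using bids finite finite_subset that by blast
  have "0 \<le> sum v W" using W Q(1) bids by (intro sum_nonneg) (auto simp: Q_def less_imp_le)
  then have "0 \<le> Z" using W_le by linarith
  have "sum v (I \<inter> Q) \<le> m * sum v W"
  proof (rule sum_le_by_charging)
    show "finite (I \<inter> Q)" by (simp add: I_def)
    show "finite W" using W Q(1) unfolding Q_def by (meson finite_atLeastAtMost finite_subset subset_trans)
    show "\<forall>i\<in>I \<inter> Q. \<forall>j\<in>I \<inter> Q. i \<noteq> j \<longrightarrow> S i \<inter> S j = {}" using disjoint by blast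
    show "\<forall>w\<in>W. finite (S w) \<and> real (card (S w)) \<le> m \<and> 0 \<le> v w"
      using W Q bids finite_S by (auto simp: Q_def less_imp_le)
    show "\<forall>i\<in>I \<inter> Q. \<exists>w\<in>W. S w \<inter> S i \<noteq> {} \<and> v i \<le> v w" using charged by (simp add: Q_def)
  qed
  also have "\<dots> \<le> m * Z" using W_le by (simp add: m_def mult_left_mono)
  finally have small: "sum v (I \<inter> Q) \<le> m * Z" .
  have large: "m < real (card (S i))" if "i \<in> I - Q" for i
    using that by (auto simp: I_def Q_def small_agents_def m_def)
  have "real (card (I - Q)) \<le> m"
    unfolding m_def using large bids disjoint finite
    by (intro card_disjoint_large_le_sqrt[where S = S]) (auto simp: I_def m_def)
  then have large_sum: "sum v (I - Q) \<le> m * Z"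
    using value_le \<open>0 \<le> Z\<close> sum_bounded_above[of "I - Q" v Z]
    by (auto simp: I_def intro: order_trans mult_right_mono)
  have "social_welfare n S v y = sum v (I \<inter> Q) + sum v (I - Q)"
    unfolding social_welfare_served I_def[symmetric] by (simp add: sum.Int_Diff I_def)
  then show ?thesis using small large_sum by (simp add: m_def)
qed

lemma phase1_fill_leftover:
  fixes v :: "nat \<Rightarrow> real"
  assumes bids: "valid_bids M n S v"
    and l: "distinct l" "set l = small_agents M n S" "sorted_wrt (\<lambda>i j. v j \<le> v i) l"
    and fill: "fill_leftover M n (phase1 S (\<lambda>_. {}) l) x"
  shows "is_allocation M n x" "owners_served n S x"
    "\<forall>j\<in>{1..n}. x j \<noteq> {} \<longrightarrow> j \<in> small_agents M n S"
    "\<forall>i\<in>small_agents M n S. \<exists>w\<in>{1..n}. x w \<noteq> {} \<and> S w \<inter> S i \<noteq> {} \<and> v i \<le> v w"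
proof -
  define y where "y = phase1 S (\<lambda>_. {}) l"
  have small: "small_agents M n S \<subseteq> {1..n}" by (auto simp: small_agents_def)
  have inv: "greedy_invariant S v l y"
    unfolding y_def using l bids small by (intro greedy_invariant_phase1) auto
  then have "\<forall>j\<in>{1..n}. y j \<subseteq> M" "\<forall>j\<in>{1..n}. \<forall>k\<in>{1..n}. j \<noteq> k \<longrightarrow> y j \<inter> y k = {}"
    using bids by (auto simp: greedy_invariant_def)
  note fill_facts = fill_leftover_allocation[OF fill[folded y_def] this]
  have winners: "y j \<noteq> {} \<and> j \<in> small_agents M n S \<and> y j = S j"
    if j: "j \<in> {1..n}" "x j \<noteq> {}" for j
  proof -
    have "y j \<noteq> {}" using fill_facts(3) j by blast
    then show ?thesis using inv l(2) by (simp add: greedy_invariant_def)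
  qed
  show "is_allocation M n x" by (rule fill_facts(1))
  show "owners_served n S x"
    unfolding owners_served_def using winners fill_facts(2) by metis
  show "\<forall>j\<in>{1..n}. x j \<noteq> {} \<longrightarrow> j \<in> small_agents M n S"
    using winners by blast
  show "\<forall>i\<in>small_agents M n S. \<exists>w\<in>{1..n}. x w \<noteq> {} \<and> S w \<inter> S i \<noteq> {} \<and> v i \<le> v w"
  proof
    fix i assume "i \<in> small_agents M n S"
    then obtain w where w: "y w \<noteq> {}" "S w \<inter> S i \<noteq> {}" "v i \<le> v w"
      using inv l(2) unfolding greedy_invariant_def by blast
    then have "w \<in> {1..n}" using inv l(2) small unfolding greedy_invariant_def by blast
    then show "\<exists>w\<in>{1..n}. x w \<noteq> {} \<and> S w \<inter> S i \<noteq> {} \<and> v i \<le> v w"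
      using w fill_facts(2) by blast
  qed
qed

lemma sm_alg_output_analysis:
  fixes v :: "nat \<Rightarrow> real"
  assumes bids: "valid_bids M n S v" and out: "sm_alg_output M n S v x"
  obtains W where "is_allocation M n x" "owners_served n S x"
    "\<forall>i\<in>{1..n}. v i \<le> cover_price n v x (S i)"
    "W \<subseteq> small_agents M n S" "\<forall>i\<in>small_agents M n S. \<exists>w\<in>W. S w \<inter> S i \<noteq> {} \<and> v i \<le> v w"
    "sum v W \<le> cover_price n v x M"
proof -
  obtain l1 l2 x2 where
    l1: "distinct l1" "set l1 = small_agents M n S" "sorted_wrt (\<lambda>i j. v j \<le> v i) l1"
    and fill: "fill_leftover M n (phase1 S (\<lambda>_. {}) l1) x2"
    and l2: "distinct l2" "set l2 = {1..n} - small_agents M n S"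
    and x: "x = phase2 n S v x2 l2"
    using out unfolding sm_alg_output_def by blast
  note P1 = phase1_fill_leftover[OF bids l1 fill]
  have nonneg: "\<forall>k\<in>{1..n}. 0 \<le> v k" using bids by (simp add: less_imp_le)
  have "\<forall>i\<in>set l2. x2 i = {}" using P1(3) l2(2) by blast
  then have P2: "is_allocation M n x" "owners_served n S x"
    "\<forall>A. cover_price n v x2 A \<le> cover_price n v x A"
    "\<forall>i\<in>set l2. v i \<le> cover_price n v x (S i)"
    unfolding x using phase2_invariant[OF bids P1(1,2) _ l2(1)] l2(2) by auto
  define W where "W = {w\<in>{1..n}. x2 w \<noteq> {}}"
  have W_small: "W \<subseteq> small_agents M n S" using P1(3) by (auto simp: W_def)
  have charged: "\<forall>i\<in>small_agents M n S. \<exists>w\<in>W. S w \<inter> S i \<noteq> {} \<and> v i \<le> v w"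
    using P1(4) unfolding W_def by (metis (mono_tags, lifting) mem_Collect_eq)
  have "sum v W = cover_price n v x2 M"
    using cover_price_items[OF P1(1)] by (simp add: W_def)
  then have W_le: "sum v W \<le> cover_price n v x M" using P2(3) by simp
  have "v i \<le> cover_price n v x (S i)" if i: "i \<in> {1..n}" for i
  proof (cases "i \<in> small_agents M n S")
    case True
    then obtain w where w: "w \<in> W" "S w \<inter> S i \<noteq> {}" "v i \<le> v w" using charged by blast
    moreover have "S w \<subseteq> x2 w" using w(1) P1(2) by (auto simp: W_def owners_served_def)
    ultimately have "x2 w \<inter> S i \<noteq> {}" by blast
    then have "v w \<le> cover_price n v x2 (S i)"
      using w(1) by (intro cover_price_ge_owner[OF nonneg]) (auto simp: W_def)
    then show ?thesis using w(3) P2(3) by (meson order_trans)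
  next
    case False
    then show ?thesis using i P2(4) l2(2) by blast
  qed
  then show ?thesis using that P2(1,2) W_small charged W_le by blast
qed

lemma sm_alg_output_approximation:
  fixes v :: "nat \<Rightarrow> real"
  assumes finite: "finite M" and bids: "valid_bids M n S v" and out: "sm_alg_output M n S v x"
  shows "is_allocation M n x \<and> is_MC_CWE n S v x \<and>
    (\<forall>y. is_allocation M n y \<longrightarrow>
       social_welfare n S v y \<le> 2 * sqrt (real (card M)) * social_welfare n S v x)"
proof -
  obtain W where alloc: "is_allocation M n x" and served: "owners_served n S x"
    and priced_out: "\<forall>i\<in>{1..n}. v i \<le> cover_price n v x (S i)"
    and W: "W \<subseteq> small_agents M n S" "\<forall>i\<in>small_agents M n S. \<exists>w\<in>W. S w \<inter> S i \<noteq> {} \<and> v i \<le> v w"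
      "sum v W \<le> cover_price n v x M"
    using sm_alg_output_analysis[OF bids out] by blast
  have nonneg: "\<forall>k\<in>{1..n}. 0 \<le> v k" using bids by (simp add: less_imp_le)
  have welfare: "social_welfare n S v x = cover_price n v x M"
    using social_welfare_owned[OF _ served] cover_price_items[OF alloc] bids by simp
  have "\<forall>i\<in>{1..n}. v i \<le> social_welfare n S v x"
    unfolding welfare using priced_out bids cover_price_mono[OF nonneg] by (meson order_trans)
  then show ?thesis
    using alloc MC_CWE_if_priced_out[OF nonneg alloc served priced_out]
      welfare_le_sqrt_bound[OF finite bids _ W(1,2)] W(3) welfare by auto
qed

lemma small_agents_cong: "\<forall>i\<in>{1..n}. S i = S' i \<Longrightarrow> small_agents M n S = small_agents M n S'"
  unfolding small_agents_def by auto

lemma phase1_cong: "\<forall>i\<in>set l. S i = S' i \<Longrightarrow> phase1 S x l = phase1 S' x l"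
  by (induction l arbitrary: x) auto

lemma phase2_cong:
  assumes "\<forall>i\<in>{1..n}. S i = S' i \<and> v i = v' i" "set l \<subseteq> {1..n}"
  shows "phase2 n S v x l = phase2 n S' v' x l"
  using assms(2)
proof (induction l arbitrary: x)
  case Nil
  then show ?case by simp
next
  case (Cons i l)
  have "cover_price n v x (S i) = cover_price n v' x (S i)"
    using assms(1) unfolding cover_price_def bundle_price_def by (intro sum.cong) auto
  then show ?case using Cons assms(1) by (simp add: phase2_Cons)
qed

lemma sorted_wrt_cong:
  "(\<And>x y. x \<in> set l \<Longrightarrow> y \<in> set l \<Longrightarrow> P x y \<longleftrightarrow> Q x y) \<Longrightarrow> sorted_wrt P l \<longleftrightarrow> sorted_wrt Q l"
  by (induction l) auto

lemma sm_alg_output_cong: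
  assumes "\<forall>i\<in>{1..n}. S i = S' i \<and> v i = v' i"
  shows "sm_alg_output M n S v x \<longleftrightarrow> sm_alg_output M n S' v' x"
proof -
  have small: "small_agents M n S = small_agents M n S'" "small_agents M n S \<subseteq> {1..n}"
    using assms small_agents_cong[of n S S' M] by (auto simp: small_agents_def)
  have sorted: "sorted_wrt (\<lambda>i j. v j \<le> v i) l \<longleftrightarrow> sorted_wrt (\<lambda>i j. v' j \<le> v' i) l"
    if l: "set l \<subseteq> {1..n}" for l
  proof (rule sorted_wrt_cong)
    fix a b assume "a \<in> set l" "b \<in> set l"
    then have "v a = v' a" "v b = v' b" using l assms by auto
    then show "v b \<le> v a \<longleftrightarrow> v' b \<le> v' a" by simp
  qed
  have "(distinct l1 \<and> set l1 = small_agents M n S' \<and> sorted_wrt (\<lambda>i j. v j \<le> v i) l1 \<and>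
          fill_leftover M n (phase1 S (\<lambda>_. {}) l1) x2 \<and>
          distinct l2 \<and> set l2 = {1..n} - small_agents M n S' \<and> sorted_wrt (\<lambda>i j. v j \<le> v i) l2 \<and>
          x = phase2 n S v x2 l2) \<longleftrightarrow>
        (distinct l1 \<and> set l1 = small_agents M n S' \<and> sorted_wrt (\<lambda>i j. v' j \<le> v' i) l1 \<and>
          fill_leftover M n (phase1 S' (\<lambda>_. {}) l1) x2 \<and>
          distinct l2 \<and> set l2 = {1..n} - small_agents M n S' \<and> sorted_wrt (\<lambda>i j. v' j \<le> v' i) l2 \<and>
          x = phase2 n S' v' x2 l2)" for l1 l2 x2
  proof (cases "set l1 = small_agents M n S' \<and> set l2 = {1..n} - small_agents M n S'")
    case True
    then have l: "set l1 \<subseteq> {1..n}" "set l2 \<subseteq> {1..n}" using small by auto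
    have "phase1 S (\<lambda>_. {}) l1 = phase1 S' (\<lambda>_. {}) l1"
      using l(1) assms by (intro phase1_cong) auto
    moreover have "phase2 n S v x2 l2 = phase2 n S' v' x2 l2"
      using l(2) assms by (intro phase2_cong) auto
    ultimately show ?thesis using sorted[OF l(1)] sorted[OF l(2)] by simp
  qed auto
  then show ?thesis unfolding sm_alg_output_def small(1) by simp
qed

lemma fill_leftover_exists: "\<exists>x'. fill_leftover M n x x'"
proof (cases "\<exists>j\<in>{1..n}. x j \<noteq> {}")
  case True
  then obtain j where j: "j \<in> {1..n}" "x j \<noteq> {}" by blast
  let ?L = "M - (\<Union>j\<in>{1..n}. x j)"
  have "fill_leftover M n x (\<lambda>k. if k = 0 then {} else x k \<union> {a\<in>?L. j = k})"
    unfolding fill_leftover_def Let_def if_P[OF True] using j by (intro exI[of _ "\<lambda>_. j"]) auto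
  then show ?thesis by blast
next
  case False
  then have "fill_leftover M n x (\<lambda>k. if k = 0 then M - (\<Union>j\<in>{1..n}. x j) else x k)"
    unfolding fill_leftover_def Let_def by auto
  then show ?thesis by blast
qed

lemma sorted_by_value_exists:
  fixes v :: "nat \<Rightarrow> real"
  assumes "finite A"
  shows "\<exists>l. distinct l \<and> set l = A \<and> sorted_wrt (\<lambda>i j. v j \<le> v i) l"
proof -
  define l where "l = sort_key (\<lambda>i. - v i) (sorted_list_of_set A)"
  have "sorted (map (\<lambda>i. - v i) l)" unfolding l_def by (rule sorted_sort_key)
  then have "sorted_wrt (\<lambda>i j. v j \<le> v i) l" by (simp add: sorted_map)
  moreover have "distinct l" "set l = A" using assms by (simp_all add: l_def)
  ultimately show ?thesis by blast
qed

lemma sm_alg_output_exists: "\<exists>x. sm_alg_output M n S v x"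
proof -
  obtain l1 where "distinct l1" "set l1 = small_agents M n S" "sorted_wrt (\<lambda>i j. v j \<le> v i) l1"
    using sorted_by_value_exists[of "small_agents M n S"] by (auto simp: small_agents_def)
  moreover obtain l2 where "distinct l2" "set l2 = {1..n} - small_agents M n S"
    "sorted_wrt (\<lambda>i j. v j \<le> v i) l2"
    using sorted_by_value_exists[of "{1..n} - small_agents M n S"] by auto
  moreover obtain x2 where "fill_leftover M n (phase1 S (\<lambda>_. {}) l1) x2"
    using fill_leftover_exists by blast
  ultimately show ?thesis unfolding sm_alg_output_def by blast
qed

fun query_all :: "(nat \<times> 'a set) list \<Rightarrow> (real list \<Rightarrow> 'b) \<Rightarrow> ('a, 'b) qtree" where
  "query_all [] F = Leaf (F [])"
| "query_all (q # qs) F = Query (fst q) (snd q) (\<lambda>r. query_all qs (\<lambda>rs. F (r # rs)))"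

lemma run_query_all:
  "run_qtree (query_all qs F) orc = (F (map (\<lambda>q. orc (fst q) (snd q)) qs), length qs)"
  by (induction qs arbitrary: F) auto

lemma sm_val_recovers_bid:
  assumes "S i \<subseteq> M" "0 < v i"
  shows "sm_val S v i M = v i" "{a\<in>M. sm_val S v i (M - {a}) = 0} = S i"
  using assms by (auto simp: sm_val_def)

lemma sm_alg_query_tree:
  assumes "finite M"
  obtains t :: "('a, nat \<Rightarrow> 'a set) qtree" where
    "\<And>S v. valid_bids M n S v \<Longrightarrow>
       snd (run_qtree t (sm_val S v)) = n * (card M + 1) \<and> sm_alg_output M n S v (fst (run_qtree t (sm_val S v)))"
proof -
  obtain xs where xs: "set xs = M" "distinct xs" using finite_distinct_list[OF assms] by blast
  define qs where "qs = concat (map (\<lambda>i. (i, M) # map (\<lambda>a. (i, M - {a})) xs) [1..<Suc n])"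
  define answer :: "real list \<Rightarrow> nat \<times> 'a set \<Rightarrow> real"
    where "answer rs q = the (map_of (zip qs rs) q)" for rs q
  define F :: "real list \<Rightarrow> nat \<Rightarrow> 'a set" where "F rs = (SOME x. sm_alg_output M n (\<lambda>i. {a\<in>M. answer rs (i, M - {a}) = 0})
                                   (\<lambda>i. answer rs (i, M)) x)" for rs
  have length: "length qs = n * (card M + 1)"
    using distinct_card[OF xs(2)] xs(1) by (simp add: qs_def length_concat o_def sum_list_triv)
  show thesis
  proof (rule that)
    fix S :: "nat \<Rightarrow> 'a set" and v :: "nat \<Rightarrow> real"
    assume bids: "valid_bids M n S v"
    define rs where "rs = map (\<lambda>q. sm_val S v (fst q) (snd q)) qs"
    have answers: "answer rs q = sm_val S v (fst q) (snd q)" if "q \<in> set qs" for q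
      using that by (simp add: answer_def rs_def map_of_zip_map)
    have "S i = {a\<in>M. answer rs (i, M - {a}) = 0} \<and> v i = answer rs (i, M)" if i: "i \<in> {1..n}" for i
    proof -
      have "i \<in> set [1..<Suc n]" using i by auto
      moreover have "(i, M) \<in> set ((i, M) # map (\<lambda>a. (i, M - {a})) xs)"
        "\<forall>a\<in>M. (i, M - {a}) \<in> set ((i, M) # map (\<lambda>a. (i, M - {a})) xs)"
        using xs(1) by auto
      ultimately have "(i, M) \<in> set qs" "\<forall>a\<in>M. (i, M - {a}) \<in> set qs"
        unfolding qs_def set_concat set_map by blast+
      then have "answer rs (i, M) = sm_val S v i M"
        "{a\<in>M. answer rs (i, M - {a}) = 0} = {a\<in>M. sm_val S v i (M - {a}) = 0}"
        using answers by auto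
      then show ?thesis using sm_val_recovers_bid[of S i M v] bids i by auto
    qed
    then have "sm_alg_output M n S v (F rs)"
      unfolding F_def using sm_alg_output_cong[of n S _ v] sm_alg_output_exists
      by (metis (no_types, lifting) someI_ex)
    then show "snd (run_qtree (query_all qs F) (sm_val S v)) = n * (card M + 1) \<and>
        sm_alg_output M n S v (fst (run_qtree (query_all qs F) (sm_val S v)))"
      by (simp add: run_query_all rs_def length)
  qed
qed

theorem theorem4:
  shows "(\<exists>C::real. C > 0 \<and>
            (\<forall>(M :: 'a set) n S v x.
               finite M \<and> (\<forall>i\<in>{1..n}. S i \<noteq> {} \<and> S i \<subseteq> M \<and> v i > 0) \<and>
               sm_alg_output M n S v x \<longrightarrow>
                 is_allocation M n x \<and> is_MC_CWE n S v x \<and>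
                 (\<forall>y. is_allocation M n y \<longrightarrow>
                      social_welfare n S v y \<le> C * sqrt (real (card M)) * social_welfare n S v x)))
       \<and> (\<exists>(c::nat) (d::nat). \<forall>(M :: 'a set) n. finite M \<longrightarrow>
            (\<exists>t :: ('a, nat \<Rightarrow> 'a set) qtree.
               \<forall>S v. (\<forall>i\<in>{1..n}. S i \<noteq> {} \<and> S i \<subseteq> M \<and> v i > 0) \<longrightarrow>
                 snd (run_qtree t (sm_val S v)) \<le> c * (n + card M + 1) ^ d \<and>
                 sm_alg_output M n S v (fst (run_qtree t (sm_val S v)))))"
proof (rule conjI, goal_cases)
  case 1
  show ?case
    using sm_alg_output_approximation by (intro exI[of _ "2::real"] conjI) (simp, blast)
next
  case 2
  have "\<exists>t :: ('a, nat \<Rightarrow> 'a set) qtree. \<forall>S v. valid_bids M n S v \<longrightarrow>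
      snd (run_qtree t (sm_val S v)) \<le> 1 * (n + card M + 1) ^ 2 \<and>
      sm_alg_output M n S v (fst (run_qtree t (sm_val S v)))"
    if "finite M" for M :: "'a set" and n
  proof -
    obtain t :: "('a, nat \<Rightarrow> 'a set) qtree" where t: "\<And>S v. valid_bids M n S v \<Longrightarrow>
        snd (run_qtree t (sm_val S v)) = n * (card M + 1) \<and>
        sm_alg_output M n S v (fst (run_qtree t (sm_val S v)))"
      using sm_alg_query_tree[OF \<open>finite M\<close>] by blast
    have "n * (card M + 1) \<le> (n + card M + 1) * (n + card M + 1)"
      by (intro mult_mono) auto
    then have "n * (card M + 1) \<le> 1 * (n + card M + 1) ^ 2"
      by (simp add: power2_eq_square)
    with t show ?thesis by (intro exI[of _ t] allI impI) simp
  qed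
  then show ?case by blast
qed

end
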